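(* Let $\Omega\subset\mathbb{R}^3$ be open with coordinates $u$ and let $\{r_1,r_2,r_3\}$ be a smooth frame on $\Omega$. Define the $3\times3$ matrices $$A_\lambda=\begin{bmatrix} c^1_{23} & \Gamma^1_{32} & -\Gamma^1_{23}\\ \Gamma^2_{31} & c^2_{13} & -\Gamma^2_{13}\\ \Gamma^3_{21} & -\Gamma^3_{12} & c^3_{12}\end{bmatrix},\qquad A_\beta=\begin{bmatrix} c^1_{23} & -\Gamma^2_{31} & \Gamma^3_{21}\\ -\Gamma^1_{32} & c^2_{13} & \Gamma^3_{12}\\ -\Gamma^1_{23} & \Gamma^2_{13} & c^3_{12}\end{bmatrix}.$$ Then the linear systems $A_\lambda(\lambda^1,\lambda^2,\lambda^3)^T=0$ (the algebraic part of the $\lambda$-system) and $A_\beta(\beta^1,\beta^2,\beta^3)^T=0$ (the algebraic part of the $\beta$-system) have equal rank, and this rank is at most $2$; i.e. $\operatorname{rank}A_\lambda=\operatorname{rank}A_\beta\le 2$.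
   Context: In coordinates $u$, write $r_i=\sum_k R_i^k(u)\,\partial/\partial u^k$, let $R=[R_1|R_2|R_3]$ have columns $R_i=(R_i^1,R_i^2,R_i^3)^T$, let $L=R^{-1}$ with rows $L^1,L^2,L^3$, and set $\Gamma^k_{ij}:=L^k\,(DR_j)\,R_i$ ($DR_j$ the $u$-Jacobian of $R_j$) and $c^k_{ij}:=\Gamma^k_{ij}-\Gamma^k_{ji}$. The algebraic part of the $\lambda$-system consists of the relations $(\lambda^i-\lambda^k)\Gamma^k_{ji}=(\lambda^j-\lambda^k)\Gamma^k_{ij}$ for $i<j$, $k\notin\{i,j\}$, which for $n=3$ is the system with matrix $A_\lambda$; the algebraic part of the $\beta$-system consists of the relations $\beta^k c^k_{ij}+\beta^j\Gamma^j_{ik}-\beta^i\Gamma^i_{jk}=0$ for $i<j$, $k\notin\{i,j\}$, which for $n=3$ is the system with matrix $A_\beta$. *)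

theory Defs
  imports "HOL-Analysis.Analysis"
begin

fun Ck_on :: "nat \<Rightarrow> (real^3) set \<Rightarrow> (real^3 \<Rightarrow> real) \<Rightarrow> bool" where
  "Ck_on 0 S g = continuous_on S g"
| "Ck_on (Suc n) S g = ((\<forall>x\<in>S. g differentiable (at x)) \<and>
      (\<forall>i. Ck_on n S (\<lambda>x. frechet_derivative g (at x) (axis i 1))))"

definition smooth_scalar_on :: "(real^3) set \<Rightarrow> (real^3 \<Rightarrow> real) \<Rightarrow> bool" where
  "smooth_scalar_on S g = (\<forall>n. Ck_on n S g)"

definition smooth_on :: "(real^3) set \<Rightarrow> (real^3 \<Rightarrow> real^3^3) \<Rightarrow> bool" where
  "smooth_on S R = (\<forall>i j. smooth_scalar_on S (\<lambda>u. R u $ i $ j))"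

text \<open>Frame given by the matrix field R, whose column j is the vector field r_j.
  Indices 1,2,3 are the elements 1,2,3 of the numeral type 3.
  Gamma k i j u = L^k (DR_j) R_i at u, with L = R^{-1}.\<close>
definition Gam :: "(real^3 \<Rightarrow> real^3^3) \<Rightarrow> 3 \<Rightarrow> 3 \<Rightarrow> 3 \<Rightarrow> real^3 \<Rightarrow> real" where
  "Gam R k i j u = row k (matrix_inv (R u)) \<bullet>
      frechet_derivative (\<lambda>v. column j (R v)) (at u) (column i (R u))"

definition cc :: "(real^3 \<Rightarrow> real^3^3) \<Rightarrow> 3 \<Rightarrow> 3 \<Rightarrow> 3 \<Rightarrow> real^3 \<Rightarrow> real" where
  "cc R k i j u = Gam R k i j u - Gam R k j i u"

definition mat3 :: "real \<Rightarrow> real \<Rightarrow> real \<Rightarrow> real \<Rightarrow> real \<Rightarrow> real \<Rightarrow> real \<Rightarrow> real \<Rightarrow> real \<Rightarrow> real^3^3" where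
  "mat3 a11 a12 a13 a21 a22 a23 a31 a32 a33 =
     vector [vector [a11, a12, a13], vector [a21, a22, a23], vector [a31, a32, a33]]"

definition A_lambda :: "(real^3 \<Rightarrow> real^3^3) \<Rightarrow> real^3 \<Rightarrow> real^3^3" where
  "A_lambda R u = mat3
     (cc R 1 2 3 u) (Gam R 1 3 2 u) (- Gam R 1 2 3 u)
     (Gam R 2 3 1 u) (cc R 2 1 3 u) (- Gam R 2 1 3 u)
     (Gam R 3 2 1 u) (- Gam R 3 1 2 u) (cc R 3 1 2 u)"

definition A_beta :: "(real^3 \<Rightarrow> real^3^3) \<Rightarrow> real^3 \<Rightarrow> real^3^3" where
  "A_beta R u = mat3
     (cc R 1 2 3 u) (- Gam R 2 3 1 u) (Gam R 3 2 1 u)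
     (- Gam R 1 3 2 u) (cc R 2 1 3 u) (Gam R 3 1 2 u)
     (- Gam R 1 2 3 u) (Gam R 2 1 3 u) (cc R 3 1 2 u)"

end

theory Submission
  imports Defs
begin

text \<open>Each row of \<open>A_lambda\<close> sums to zero, because \<open>c\<^sup>k\<^sub>i\<^sub>j = \<Gamma>\<^sup>k\<^sub>i\<^sub>j - \<Gamma>\<^sup>k\<^sub>j\<^sub>i\<close>, so
  \<open>(1,1,1)\<close> lies in its kernel and its rank is at most 2. Moreover \<open>A_beta\<close> is the transpose
  of \<open>A_lambda\<close> conjugated by \<open>diag(1,-1,1)\<close>; as neither transposition nor multiplication by
  invertible matrices changes the rank, the two ranks agree. No property of the frame is
  needed: the statement holds pointwise for arbitrary values of the \<open>\<Gamma>\<^sup>k\<^sub>i\<^sub>j\<close>.\<close>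

lemma rank_invertible_mult:
  fixes A :: "real^'n^'m" and P :: "real^'m^'m" and Q :: "real^'n^'n"
  assumes "invertible P" and "invertible Q"
  shows "rank (P ** A ** Q) = rank A"
proof (rule antisym)
  show "rank (P ** A ** Q) \<le> rank A"
    by (meson order_trans rank_mul_le_left rank_mul_le_right)
  obtain P' Q' where "P' ** P = mat 1" and "Q ** Q' = mat 1"
    using assms unfolding invertible_def by blast
  then have "A = P' ** (P ** A ** Q) ** Q'"
    by (metis matrix_mul_assoc matrix_mul_lid matrix_mul_rid)
  then show "rank A \<le> rank (P ** A ** Q)"
    by (metis order_trans rank_mul_le_left rank_mul_le_right)
qed

lemma rank_less_card_if_kernel_nonzero:
  fixes A :: "real^'n^'m"
  assumes "A *v x = 0" and "x \<noteq> 0"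
  shows "rank A < CARD('n)"
  using assms matrix_nonfull_linear_equations_eq[of A] rank_bound[of A] by fastforce

lemma mat3_nth:
  "mat3 a11 a12 a13 a21 a22 a23 a31 a32 a33 $ i $ j =
    (if i = 1 then (if j = 1 then a11 else if j = 2 then a12 else a13)
     else if i = 2 then (if j = 1 then a21 else if j = 2 then a22 else a23)
     else (if j = 1 then a31 else if j = 2 then a32 else a33))"
  using exhaust_3[of i] exhaust_3[of j] by (auto simp: mat3_def)

definition flip_2 :: "real^3^3" where
  "flip_2 = mat3 1 0 0 0 (-1) 0 0 0 1"

lemma invertible_flip_2: "invertible flip_2"
proof -
  have "flip_2 ** flip_2 = mat 1"
    by (simp add: flip_2_def vec_eq_iff forall_3 matrix_matrix_mult_def sum_3 mat3_nth mat_def)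
  then show ?thesis
    unfolding invertible_def by blast
qed

lemma A_beta_eq_flip_transpose_A_lambda:
  "A_beta R u = flip_2 ** transpose (A_lambda R u) ** flip_2"
  by (simp add: A_beta_def A_lambda_def flip_2_def vec_eq_iff forall_3
      matrix_matrix_mult_def sum_3 transpose_def mat3_nth)

lemma A_lambda_kernel: "A_lambda R u *v vector [1, 1, 1] = 0"
  by (simp add: A_lambda_def cc_def vec_eq_iff forall_3 matrix_vector_mult_def sum_3 mat3_nth)

theorem proposition4p2:
  fixes \<Omega> :: "(real^3) set" and R :: "real^3 \<Rightarrow> real^3^3"
  assumes "open \<Omega>"
    and "smooth_on \<Omega> R"
    and "\<forall>u\<in>\<Omega>. invertible (R u)"
  shows "\<forall>u\<in>\<Omega>. rank (A_lambda R u) = rank (A_beta R u) \<and> rank (A_lambda R u) \<le> 2"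
proof
  fix u
  have "rank (A_beta R u) = rank (A_lambda R u)"
    unfolding A_beta_eq_flip_transpose_A_lambda
    by (simp add: rank_invertible_mult invertible_flip_2 rank_transpose)
  moreover have "rank (A_lambda R u) < CARD(3)"
    by (rule rank_less_card_if_kernel_nonzero[OF A_lambda_kernel]) (simp add: vec_eq_iff forall_3)
  ultimately show "rank (A_lambda R u) = rank (A_beta R u) \<and> rank (A_lambda R u) \<le> 2"
    by simp
qed

end
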